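(* Consider the control system described in the context and suppose Assumptions A1 and A2 hold. Then every $y\in\partial\mathcal{D}$ satisfies at least one of: (1) $y\in\partial\mathcal{D}_0$; (2) $y\in\partial\mathcal{D}_{s}\cap\mathcal{D}_0$; (3) $y\in(\mathcal{D}_{s}\cap\mathcal{D}_0)\setminus\mathcal{D}$.
   Context: System: $\dot x = f(x)+g(x)u$, $x\in\mathbb{R}^n$, $u\in\mathbb{R}^m$, where $f:\mathbb{R}^n\to\mathbb{R}^n$ and $g:\mathbb{R}^n\to\mathbb{R}^{n\times m}$ are locally Lipschitz and $f(0)=0$. Admissible controls are $\mathcal{U}=L^\infty([0,\infty);\mathbb{R}^m)$; $\phi(t;x,u)$ denotes the unique solution with $\phi(0;x,u)=x$ under $u\in\mathcal{U}$, and it is assumed to exist for all $t\ge 0$. $\mathbb{B}(x;r)$ is the closed Euclidean ball of radius $r$ about $x$. An obstacle set $U\subseteq\mathbb{R}^n$ is given and $S:=\mathbb{R}^n\setminus U$. Definitions: $\mathcal{D}_0=\{x:\exists u\in\mathcal{U},\ \lim_{t\to\infty}\|\phi(t;x,u)\|=0\}$; $\mathcal{D}=\{x:\exists u\in\mathcal{U},\ \lim_{t\to\infty}\|\phi(t;x,u)\|=0 \text{ and } \phi(t;x,u)\notin U\ \forall t\ge0\}$; exit time $\tau(x,u)=\inf\{t\ge0:\phi(t;x,u)\in U\}$ (with $\inf\emptyset=+\infty$); $\mathcal{D}_s=\{x:\exists u\in\mathcal{U},\ \tau(x,u)=\infty\}$. Assumption A1 (local stabilizability): there exist $r>0$, $k>0$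 and $\beta\in\mathcal{KL}$ such that for every $x\in\mathbb{B}(0;r)$ there is $u\in\mathcal{U}$ with $\|u\|_\infty\le k$ and $\|\phi(t;x,u)\|\le\beta(\|x\|,t)$ for all $t\ge0$. Assumption A2: (i) $S=\{x\in\mathbb{R}^n: h(x)<1\}$ for some locally Lipschitz $h:\mathbb{R}^n\to\mathbb{R}$; (ii) $S$ is open and connected; (iii) $\mathbb{B}(0;r)\subseteq S\subseteq\mathcal{D}_0$, with $r$ from Assumption A1. *)

theory Defs
  imports "HOL-Analysis.Analysis"
begin

definition loc_lipschitz :: "('a::metric_space \<Rightarrow> 'b::real_normed_vector) \<Rightarrow> bool" where
  "loc_lipschitz F \<longleftrightarrow>
     (\<forall>x. \<exists>\<delta>>0. \<exists>L. \<forall>y\<in>cball x \<delta>. \<forall>z\<in>cball x \<delta>. norm (F y - F z) \<le> L * dist y z)"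

(* Admissible controls: U = L^\<infinity>([0,\<infinity>); R^m), represented by measurable,
   essentially bounded functions on [0,\<infinity>) *)
definition admissible :: "(real \<Rightarrow> real^'m) set" where
  "admissible = {u. u \<in> borel_measurable (restrict_space lborel {0..}) \<and>
                    (\<exists>k. AE t in lborel. t \<ge> 0 \<longrightarrow> norm (u t) \<le> k)}"

definition ess_bounded_by :: "(real \<Rightarrow> real^'m) \<Rightarrow> real \<Rightarrow> bool" where
  "ess_bounded_by u k \<longleftrightarrow> (AE t in lborel. t \<ge> 0 \<longrightarrow> norm (u t) \<le> k)"

(* \<phi> is a (Caratheodory) solution of x' = f x + g x u on [0,\<infinity>) with \<phi>(0) = x *)
definition is_solution ::
  "(real^'n \<Rightarrow> real^'n) \<Rightarrow> (real^'n \<Rightarrow> real^'m^'n) \<Rightarrow> real^'n \<Rightarrow> (real \<Rightarrow> real^'m)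
     \<Rightarrow> (real \<Rightarrow> real^'n) \<Rightarrow> bool" where
  "is_solution f g x u \<phi> \<longleftrightarrow>
     continuous_on {0..} \<phi> \<and>
     (\<forall>t\<ge>0. (\<lambda>s. f (\<phi> s) + g (\<phi> s) *v u s) integrable_on {0..t} \<and>
             \<phi> t = x + integral {0..t} (\<lambda>s. f (\<phi> s) + g (\<phi> s) *v u s))"

definition class_K :: "(real \<Rightarrow> real) \<Rightarrow> bool" where
  "class_K \<alpha> \<longleftrightarrow> continuous_on {0..} \<alpha> \<and> strict_mono_on {0..} \<alpha> \<and> \<alpha> 0 = 0"

definition class_KL :: "(real \<Rightarrow> real \<Rightarrow> real) \<Rightarrow> bool" where
  "class_KL \<beta> \<longleftrightarrow> continuous_on ({0..} \<times> {0..}) (\<lambda>(s,t). \<beta> s t) \<and>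
     (\<forall>t\<ge>0. class_K (\<lambda>s. \<beta> s t)) \<and>
     (\<forall>s\<ge>0. antimono_on {0..} (\<lambda>t. \<beta> s t) \<and> ((\<lambda>t. \<beta> s t) \<longlongrightarrow> 0) at_top)"

definition D0_set :: "(real \<Rightarrow> real^'n \<Rightarrow> (real \<Rightarrow> real^'m) \<Rightarrow> real^'n) \<Rightarrow> (real^'n) set" where
  "D0_set \<phi> = {x. \<exists>u\<in>admissible. ((\<lambda>t. norm (\<phi> t x u)) \<longlongrightarrow> 0) at_top}"

definition D_set :: "(real \<Rightarrow> real^'n \<Rightarrow> (real \<Rightarrow> real^'m) \<Rightarrow> real^'n) \<Rightarrow> (real^'n) set
     \<Rightarrow> (real^'n) set" where
  "D_set \<phi> U = {x. \<exists>u\<in>admissible. ((\<lambda>t. norm (\<phi> t x u)) \<longlongrightarrow> 0) at_top \<and>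
                     (\<forall>t\<ge>0. \<phi> t x u \<notin> U)}"

(* exit time, with inf {} = +\<infinity> *)
definition exit_time :: "(real \<Rightarrow> real^'n \<Rightarrow> (real \<Rightarrow> real^'m) \<Rightarrow> real^'n) \<Rightarrow> (real^'n) set
     \<Rightarrow> real^'n \<Rightarrow> (real \<Rightarrow> real^'m) \<Rightarrow> ereal" where
  "exit_time \<phi> U x u = Inf (ereal ` {t. t \<ge> 0 \<and> \<phi> t x u \<in> U})"

definition Ds_set :: "(real \<Rightarrow> real^'n \<Rightarrow> (real \<Rightarrow> real^'m) \<Rightarrow> real^'n) \<Rightarrow> (real^'n) set
     \<Rightarrow> (real^'n) set" where
  "Ds_set \<phi> U = {x. \<exists>u\<in>admissible. exit_time \<phi> U x u = \<infinity>}"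

end

theory Submission
  imports Defs
begin

(* The substance is that D is open. A point y of D is steered by some admissible u, inside the
   open set S, into a small ball B(0, rho) from which the controls of A1 keep trajectories in
   B(0, r), a subset of S, and drive them to 0. A Gronwall estimate on a compact tube around the
   trajectory of y shows that all initial points near y follow u inside S into B(0, rho) as well;
   switching there to the A1 control puts them in D. Once D is open, a boundary point of D lies
   outside D, and D being contained in both D_0 and D_s gives the trichotomy. *)

(* norm A is the Frobenius norm of the matrix A. *)
lemma norm_matrix_vector_mult_le:
  fixes A :: "real^'m^'n"
  shows "norm (A *v x) \<le> norm A * norm x"
proof -
  have "(norm (A *v x))\<^sup>2 = (\<Sum>i\<in>UNIV. ((A *v x)$i)\<^sup>2)"
    by (simp add: norm_vec_def L2_set_def sum_nonneg)
  also have "\<dots> \<le> (\<Sum>i\<in>UNIV. (norm (A$i))\<^sup>2 * (norm x)\<^sup>2)"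
  proof (rule sum_mono)
    fix i
    have "\<bar>(A *v x)$i\<bar> \<le> norm (A$i) * norm x"
      by (simp add: matrix_vector_mul_component Cauchy_Schwarz_ineq2)
    then show "((A *v x)$i)\<^sup>2 \<le> (norm (A$i))\<^sup>2 * (norm x)\<^sup>2"
      by (metis abs_ge_zero power2_abs power_mono power_mult_distrib)
  qed
  also have "\<dots> = (norm A * norm x)\<^sup>2"
    by (simp add: norm_vec_def L2_set_def sum_distrib_right power_mult_distrib sum_nonneg)
  finally show ?thesis
    by (meson mult_nonneg_nonneg norm_ge_zero power2_le_imp_le)
qed

lemma AE_lborel_iff_negligible:
  "(AE x in lborel. P x) \<longleftrightarrow> (\<exists>N. negligible N \<and> {x. \<not> P x} \<subseteq> N)"
  by (metis AE_completion_iff eventually_ae_filter_negligible)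

lemma integral_norm_bound_integral_ae:
  fixes f :: "'n::euclidean_space \<Rightarrow> 'a::banach"
  assumes f: "f integrable_on S" and g: "g integrable_on S" and N: "negligible N"
    and le: "\<And>x. x \<in> S \<Longrightarrow> x \<notin> N \<Longrightarrow> norm (f x) \<le> g x"
  shows "norm (integral S f) \<le> integral S g"
proof -
  define f' where "f' x = (if x \<in> N then 0 else f x)" for x
  define g' where "g' x = (if x \<in> N then 0 else g x)" for x
  have "integral S f' = integral S f" "integral S g' = integral S g"
    using N by (auto intro!: integral_spike simp: f'_def g'_def)
  moreover have "norm (integral S f') \<le> integral S g'"
  proof (rule integral_norm_bound_integral)
    show "f' integrable_on S" "g' integrable_on S"
      using f g N by (auto intro: integrable_spike simp: f'_def g'_def)
  qed (use le in \<open>auto simp: f'_def g'_def\<close>)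
  ultimately show ?thesis by simp
qed

lemma gronwall_inequality:
  fixes w :: "real \<Rightarrow> real"
  assumes cont: "continuous_on {0..S} w" and C: "C \<ge> 0"
    and le: "\<And>t. t \<in> {0..S} \<Longrightarrow> w t \<le> a + C * integral {0..t} w"
    and t: "t \<in> {0..S}"
  shows "w t \<le> a * exp (C * t)"
proof -
  define V where "V t = integral {0..t} w" for t
  define Q where "Q t = exp (- C * t) * (a + C * V t)" for t
  have dV: "(V has_real_derivative w s) (at s within {0..S})" if "s \<in> {0..S}" for s
    unfolding V_def by (rule integral_has_real_derivative[OF cont that])
  have "continuous_on {0..S} V"
    using dV by (meson DERIV_continuous continuous_at_imp_continuous_on continuous_on_eq_continuous_within)
  then have contQ: "continuous_on {0..t} Q"
    unfolding Q_def using t by (auto intro!: continuous_intros intro: continuous_on_subset)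
  have "Q t \<le> Q 0"
  proof (rule DERIV_nonpos_imp_decreasing_open[of 0 t Q])
    fix s assume s: "0 < s" "s < t"
    then have sS: "s \<in> {0..S}" using t by auto
    have "at s within {0..S} = at s"
      using s t by (intro at_within_interior) auto
    then have "(Q has_real_derivative (exp (- C * s) * C * (w s - (a + C * V s)))) (at s)"
      unfolding Q_def using dV[OF sS] by (auto intro!: derivative_eq_intros simp: algebra_simps)
    moreover have "exp (- C * s) * C * (w s - (a + C * V s)) \<le> 0"
      using le[OF sS] C by (simp add: V_def mult_nonneg_nonpos)
    ultimately show "\<exists>y. (Q has_real_derivative y) (at s) \<and> y \<le> 0" by blast
  qed (use t contQ in auto)
  then have "a + C * V t \<le> a * exp (C * t)"
    by (simp add: Q_def V_def exp_minus field_simps)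
  then show ?thesis using le[OF t] by (simp add: V_def)
qed

lemma bound_by_continuous_induction:
  fixes \<delta> :: "real \<Rightarrow> real"
  assumes cont: "continuous_on {a..b} \<delta>" and start: "\<delta> a < \<epsilon>"
    and step: "\<And>t. t \<in> {a..b} \<Longrightarrow> \<forall>s\<in>{a..t}. \<delta> s \<le> \<epsilon> \<Longrightarrow> \<delta> t < \<epsilon>"
    and t: "t \<in> {a..b}"
  shows "\<delta> t < \<epsilon>"
proof (rule ccontr)
  define A where "A = {a..b} \<inter> \<delta> -` {\<epsilon>..}"
  assume "\<not> \<delta> t < \<epsilon>"
  then have "t \<in> A" using t by (simp add: A_def)
  moreover have "closed A"
    unfolding A_def by (rule continuous_closed_preimage[OF cont]) auto
  moreover have bdd: "bdd_below A"
    by (rule bdd_belowI[of _ a]) (auto simp: A_def)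
  ultimately have first: "Inf A \<in> A"
    by (intro closed_contains_Inf) auto
  have below: "\<delta> s < \<epsilon>" if "s \<in> {a..<Inf A}" for s
    using cInf_lower[OF _ bdd, of s] that first by (force simp: A_def)
  obtain s where "a \<le> s" "s \<le> Inf A" "\<delta> s = \<epsilon>"
    using IVT'[of \<delta> a \<epsilon> "Inf A"] start first continuous_on_subset[OF cont]
    by (force simp: A_def)
  moreover have "\<not> s < Inf A"
    using below[of s] \<open>a \<le> s\<close> \<open>\<delta> s = \<epsilon>\<close> by auto
  ultimately have "\<forall>s\<in>{a..Inf A}. \<delta> s \<le> \<epsilon>"
    using below by (metis atLeastAtMost_iff atLeastLessThan_iff less_eq_real_def order_antisym)
  then have "\<delta> (Inf A) < \<epsilon>"
    using step first by (auto simp: A_def)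
  then show False using first by (simp add: A_def)
qed

lemma loc_lipschitz_imp_lipschitz_on_compact:
  fixes F :: "'a::metric_space \<Rightarrow> 'b::real_normed_vector"
  assumes F: "loc_lipschitz F" and K: "compact K"
  obtains L where "L-lipschitz_on K F"
proof -
  (* The library result is about families of maps; use the constant family indexed by {0}. *)
  have "local_lipschitz {0::real} K (\<lambda>_. F)"
  proof (rule local_lipschitzI)
    fix t x
    obtain \<delta> L where "\<delta> > 0" and L: "\<forall>y\<in>cball x \<delta>. \<forall>z\<in>cball x \<delta>. norm (F y - F z) \<le> L * dist y z"
      using F unfolding loc_lipschitz_def by blast
    moreover have "(max L 0)-lipschitz_on (cball x \<delta> \<inter> K) F"
    proof (rule lipschitz_onI)
      fix y z assume "y \<in> cball x \<delta> \<inter> K" "z \<in> cball x \<delta> \<inter> K"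
      then have "dist (F y) (F z) \<le> L * dist y z" using L by (simp add: dist_norm)
      also have "\<dots> \<le> max L 0 * dist y z" by (simp add: mult_right_mono)
      finally show "dist (F y) (F z) \<le> max L 0 * dist y z" .
    qed simp
    ultimately show "\<exists>u>0. \<exists>L. \<forall>t\<in>cball t u \<inter> {0::real}. L-lipschitz_on (cball x u \<inter> K) F"
      by blast
  qed
  then obtain L where "\<And>t. t \<in> {0::real} \<Longrightarrow> L-lipschitz_on K F"
    by (rule local_lipschitz_compact_implies_lipschitz[OF _ K]) auto
  then show ?thesis using that by blast
qed

lemma loc_lipschitz_uniform_near_compact:
  fixes F :: "'a::{real_normed_vector,heine_borel} \<Rightarrow> 'b::real_normed_vector"
  assumes F: "loc_lipschitz F" and K: "compact K"
  obtains L where "\<And>q. q \<in> K \<Longrightarrow> L-lipschitz_on (cball q e) F"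
proof -
  define K' where "K' = {q + d | q d. q \<in> K \<and> d \<in> cball 0 e}"
  have "compact K'"
    unfolding K'_def using K by (intro compact_sums) auto
  then obtain L where L: "L-lipschitz_on K' F"
    using loc_lipschitz_imp_lipschitz_on_compact[OF F] by blast
  have sub: "cball q e \<subseteq> K'" if "q \<in> K" for q
  proof
    fix y assume "y \<in> cball q e"
    then have "y = q + (y - q) \<and> y - q \<in> cball 0 e" by (simp add: dist_norm norm_minus_commute)
    then show "y \<in> K'" unfolding K'_def using that by blast
  qed
  show ?thesis
    using lipschitz_on_subset[OF L sub] that by blast
qed

lemma is_solution_initial: "is_solution f g x u p \<Longrightarrow> p 0 = x"
  by (simp add: is_solution_def)

lemma is_solution_continuous_on:
  "is_solution f g x u p \<Longrightarrow> S \<subseteq> {0..} \<Longrightarrow> continuous_on S p"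
  unfolding is_solution_def by (blast intro: continuous_on_subset)

lemma solution_difference_integral_bound:
  fixes f :: "real^'n \<Rightarrow> real^'n" and g :: "real^'n \<Rightarrow> real^'m^'n"
  assumes sol: "is_solution f g x u p" and sol': "is_solution f g x' u' p'"
    and u_bound: "ess_bounded_by u M" and t: "t \<ge> 0"
    and same_control: "\<forall>s\<in>{0..<t}. u' s = u s"
    and f_lip: "\<And>s. s \<in> {0..t} \<Longrightarrow> Lf-lipschitz_on (cball (p s) e) f"
    and g_lip: "\<And>s. s \<in> {0..t} \<Longrightarrow> Lg-lipschitz_on (cball (p s) e) g"
    and near: "\<forall>s\<in>{0..t}. norm (p' s - p s) \<le> e"
  shows "norm (p' t - p t) \<le> norm (x' - x) + (Lf + Lg * M) * integral {0..t} (\<lambda>s. norm (p' s - p s))"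
proof -
  define F where "F s = f (p s) + g (p s) *v u s" for s
  define F' where "F' s = f (p' s) + g (p' s) *v u' s" for s
  have F: "F integrable_on {0..t}" "p t = x + integral {0..t} F"
    and F': "F' integrable_on {0..t}" "p' t = x' + integral {0..t} F'"
    using sol sol' t unfolding is_solution_def F_def F'_def by auto
  obtain N where N: "negligible N" "\<And>s. s \<notin> N \<Longrightarrow> s \<ge> 0 \<Longrightarrow> norm (u s) \<le> M"
    using u_bound unfolding ess_bounded_by_def AE_lborel_iff_negligible by auto
  have "continuous_on {0..t} p" "continuous_on {0..t} p'"
    using sol sol' by (auto intro: is_solution_continuous_on)
  then have int_dist: "(\<lambda>s. (Lf + Lg * M) * norm (p' s - p s)) integrable_on {0..t}"
    by (intro integrable_continuous_real continuous_intros)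
  have pointwise: "norm (F' s - F s) \<le> (Lf + Lg * M) * norm (p' s - p s)"
    if s: "s \<in> {0..t}" "s \<notin> N \<union> {t}" for s
  proof -
    have "u' s = u s" "norm (u s) \<le> M"
      using same_control N(2) s by auto
    have s_in: "s \<in> {0..t}" using s by simp
    have ball: "p' s \<in> cball (p s) e" "p s \<in> cball (p s) e"
      using near s by (auto simp: dist_norm norm_minus_commute intro: order_trans[OF norm_ge_zero])
    have lip: "norm (f (p' s) - f (p s)) \<le> Lf * norm (p' s - p s)"
        "norm (g (p' s) - g (p s)) \<le> Lg * norm (p' s - p s)"
      using lipschitz_on_normD[OF f_lip[OF s_in] ball] lipschitz_on_normD[OF g_lip[OF s_in] ball] .
    have "F' s - F s = (f (p' s) - f (p s)) + (g (p' s) - g (p s)) *v u s"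
      by (simp add: F_def F'_def \<open>u' s = u s\<close> matrix_vector_mult_diff_rdistrib)
    then have "norm (F' s - F s) \<le> norm (f (p' s) - f (p s)) + norm (g (p' s) - g (p s)) * norm (u s)"
      by (metis norm_matrix_vector_mult_le norm_triangle_le add_left_mono)
    also have "\<dots> \<le> Lf * norm (p' s - p s) + (Lg * norm (p' s - p s)) * M"
      using lip \<open>norm (u s) \<le> M\<close> lipschitz_on_nonneg[OF g_lip[OF s_in]]
      by (intro add_mono mult_mono) auto
    finally show ?thesis by (simp add: algebra_simps)
  qed
  have "p' t - p t = (x' - x) + integral {0..t} (\<lambda>s. F' s - F s)"
    using F F' by (simp add: integral_diff)
  then have "norm (p' t - p t) \<le> norm (x' - x) + norm (integral {0..t} (\<lambda>s. F' s - F s))"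
    by (metis norm_triangle_ineq)
  also have "norm (integral {0..t} (\<lambda>s. F' s - F s)) \<le> integral {0..t} (\<lambda>s. (Lf + Lg * M) * norm (p' s - p s))"
    using N(1) by (intro integral_norm_bound_integral_ae[where N = "N \<union> {t}", OF
          integrable_diff[OF F'(1) F(1)] int_dist _ pointwise]) auto
  finally show ?thesis by simp
qed

lemma admissible_ess_bounded:
  assumes "u \<in> admissible"
  obtains M where "M \<ge> 0" "ess_bounded_by u M"
proof -
  obtain k where "AE t in lborel. t \<ge> 0 \<longrightarrow> norm (u t) \<le> k"
    using assms by (auto simp: admissible_def)
  then have "ess_bounded_by u (max k 0)"
    unfolding ess_bounded_by_def by (rule eventually_mono) auto
  then show ?thesis using that[of "max k 0"] by simp
qed

lemma solution_difference_gronwall: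
  fixes f :: "real^'n \<Rightarrow> real^'n" and g :: "real^'n \<Rightarrow> real^'m^'n"
  assumes sol: "is_solution f g x u p" and sol': "is_solution f g x' u' p'"
    and M: "ess_bounded_by u M" and "M \<ge> 0" and same_control: "\<forall>s\<in>{0..<T}. u' s = u s"
    and Lf: "\<And>s. s \<in> {0..T} \<Longrightarrow> Lf-lipschitz_on (cball (p s) \<epsilon>) f"
    and Lg: "\<And>s. s \<in> {0..T} \<Longrightarrow> Lg-lipschitz_on (cball (p s) \<epsilon>) g"
    and close: "norm (x' - x) * exp ((Lf + Lg * M) * T) < \<epsilon>" and t: "t \<in> {0..T}"
  shows "norm (p' t - p t) \<le> norm (x' - x) * exp ((Lf + Lg * M) * t)"
proof -
  define C where "C = Lf + Lg * M"
  define \<delta> where "\<delta> s = norm (p' s - p s)" for s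
  have "C \<ge> 0"
    using lipschitz_on_nonneg[OF Lf[of 0]] lipschitz_on_nonneg[OF Lg[of 0]] \<open>M \<ge> 0\<close> t
    by (simp add: C_def)
  have "continuous_on {0..T} p" "continuous_on {0..T} p'"
    using sol sol' by (auto intro: is_solution_continuous_on)
  then have cont: "continuous_on {0..T} \<delta>"
    unfolding \<delta>_def by (intro continuous_intros)
  have grow: "norm (x' - x) * exp (C * s) \<le> norm (x' - x) * exp (C * T)" if "s \<le> T" for s
    using that \<open>C \<ge> 0\<close> by (simp add: mult_left_mono)
  (* The Lipschitz bounds, hence Gronwall, are only available while p' stays in the tube of
     radius \<epsilon> around p; the continuous induction below shows that it never leaves. *)
  have estimate: "\<delta> s \<le> norm (x' - x) * exp (C * s)"
    if s: "s \<in> {0..T}" and near: "\<forall>r\<in>{0..s}. \<delta> r \<le> \<epsilon>" for s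
  proof (rule gronwall_inequality[OF _ \<open>C \<ge> 0\<close>])
    show "continuous_on {0..s} \<delta>"
      by (rule continuous_on_subset[OF cont]) (use s in auto)
    fix r assume r: "r \<in> {0..s}"
    show "\<delta> r \<le> norm (x' - x) + C * integral {0..r} \<delta>"
      unfolding \<delta>_def C_def
    proof (rule solution_difference_integral_bound[OF sol sol' M])
      show "\<forall>s\<in>{0..<r}. u' s = u s" "\<And>q. q \<in> {0..r} \<Longrightarrow> Lf-lipschitz_on (cball (p q) \<epsilon>) f"
        "\<And>q. q \<in> {0..r} \<Longrightarrow> Lg-lipschitz_on (cball (p q) \<epsilon>) g"
        using same_control Lf Lg r s by auto
      show "\<forall>q\<in>{0..r}. norm (p' q - p q) \<le> \<epsilon>"
        using near r by (auto simp: \<delta>_def)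
    qed (use r in auto)
  qed (use s in simp)
  have "\<delta> s < \<epsilon>" if "s \<in> {0..T}" for s
  proof (rule bound_by_continuous_induction[OF cont _ _ that])
    show "\<delta> 0 < \<epsilon>"
      using grow[of 0] close t by (simp add: \<delta>_def C_def is_solution_initial[OF sol] is_solution_initial[OF sol'])
    show "\<delta> s < \<epsilon>" if "s \<in> {0..T}" "\<forall>r\<in>{0..s}. \<delta> r \<le> \<epsilon>" for s
      using estimate[OF that] grow[of s] close that(1) by (auto simp: C_def)
  qed
  then have "\<forall>r\<in>{0..t}. \<delta> r \<le> \<epsilon>"
    using t by (auto intro: less_imp_le)
  from estimate[OF t this] show ?thesis by (simp add: \<delta>_def C_def)
qed

lemma solution_stability:
  fixes f :: "real^'n \<Rightarrow> real^'n" and g :: "real^'n \<Rightarrow> real^'m^'n"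
  assumes f_lip: "loc_lipschitz f" and g_lip: "loc_lipschitz g"
    and u: "u \<in> admissible" and sol: "is_solution f g x u p" and "T \<ge> 0"
  obtains C where "C \<ge> 0"
    "\<And>x' u' p' t. is_solution f g x' u' p' \<Longrightarrow> \<forall>s\<in>{0..<T}. u' s = u s \<Longrightarrow>
       norm (x' - x) * exp (C * T) < \<epsilon> \<Longrightarrow> t \<in> {0..T} \<Longrightarrow>
       norm (p' t - p t) \<le> norm (x' - x) * exp (C * t)"
proof -
  have "compact (p ` {0..T})"
    by (intro compact_continuous_image is_solution_continuous_on[OF sol]) auto
  then obtain Lf Lg where
    Lf: "\<And>s. s \<in> {0..T} \<Longrightarrow> Lf-lipschitz_on (cball (p s) \<epsilon>) f" and
    Lg: "\<And>s. s \<in> {0..T} \<Longrightarrow> Lg-lipschitz_on (cball (p s) \<epsilon>) g"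
    using loc_lipschitz_uniform_near_compact[OF f_lip] loc_lipschitz_uniform_near_compact[OF g_lip]
    by (metis image_eqI)
  obtain M where "M \<ge> 0" and M: "ess_bounded_by u M"
    using admissible_ess_bounded[OF u] .
  have "Lf + Lg * M \<ge> 0"
    using lipschitz_on_nonneg[OF Lf[of 0]] lipschitz_on_nonneg[OF Lg[of 0]] \<open>M \<ge> 0\<close> \<open>T \<ge> 0\<close>
    by simp
  then show ?thesis
    using that solution_difference_gronwall[OF sol _ M \<open>M \<ge> 0\<close> _ Lf Lg] by blast
qed

lemma solution_unique:
  fixes f :: "real^'n \<Rightarrow> real^'n" and g :: "real^'n \<Rightarrow> real^'m^'n"
  assumes "loc_lipschitz f" "loc_lipschitz g" "u \<in> admissible"
    and "is_solution f g x u p" "is_solution f g x u' p'"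
    and "\<forall>s\<in>{0..<T}. u' s = u s" and "t \<in> {0..T}"
  shows "p' t = p t"
proof -
  have "T \<ge> 0" using assms(7) by simp
  then obtain C where "C \<ge> 0" and estimate: "\<And>x' u' p' t. is_solution f g x' u' p' \<Longrightarrow>
       \<forall>s\<in>{0..<T}. u' s = u s \<Longrightarrow> norm (x' - x) * exp (C * T) < 1 \<Longrightarrow> t \<in> {0..T} \<Longrightarrow>
       norm (p' t - p t) \<le> norm (x' - x) * exp (C * t)"
    using solution_stability[OF assms(1-4)] by blast
  from estimate[OF assms(5,6) _ assms(7)] show ?thesis by simp
qed

lemma solution_continuous_dependence:
  fixes f :: "real^'n \<Rightarrow> real^'n" and g :: "real^'n \<Rightarrow> real^'m^'n"
  assumes "loc_lipschitz f" "loc_lipschitz g" "u \<in> admissible"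
    and "is_solution f g y u p" and "T \<ge> 0" and "\<epsilon> > 0"
  obtains \<delta> where "\<delta> > 0"
    "\<And>x q t. is_solution f g x u q \<Longrightarrow> dist x y < \<delta> \<Longrightarrow> t \<in> {0..T} \<Longrightarrow> dist (q t) (p t) < \<epsilon>"
proof -
  obtain C where "C \<ge> 0" and estimate: "\<And>x' u' p' t. is_solution f g x' u' p' \<Longrightarrow>
       \<forall>s\<in>{0..<T}. u' s = u s \<Longrightarrow> norm (x' - y) * exp (C * T) < \<epsilon> \<Longrightarrow> t \<in> {0..T} \<Longrightarrow>
       norm (p' t - p t) \<le> norm (x' - y) * exp (C * t)"
    using solution_stability[OF assms(1-5)] by blast
  have "dist (q t) (p t) < \<epsilon>"
    if q: "is_solution f g x u q" and x: "dist x y < \<epsilon> / exp (C * T)" and t: "t \<in> {0..T}" for x q t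
  proof -
    have close: "norm (x - y) * exp (C * T) < \<epsilon>"
      using x by (simp add: dist_norm pos_less_divide_eq)
    have "dist (q t) (p t) \<le> norm (x - y) * exp (C * t)"
      using estimate[OF q _ close t] by (simp add: dist_norm)
    also have "\<dots> \<le> norm (x - y) * exp (C * T)"
      using t \<open>C \<ge> 0\<close> by (simp add: mult_left_mono)
    finally show ?thesis using close by simp
  qed
  then show ?thesis
    using that[of "\<epsilon> / exp (C * T)"] \<open>\<epsilon> > 0\<close> by simp
qed

lemma solution_shift:
  fixes f :: "real^'n \<Rightarrow> real^'n" and g :: "real^'n \<Rightarrow> real^'m^'n"
  assumes sol: "is_solution f g x w p" and T: "T \<ge> 0" and vw: "\<forall>s\<ge>0. v s = w (T + s)"
  shows "is_solution f g (p T) v (\<lambda>s. p (T + s))"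
proof -
  define F where "F \<tau> = f (p \<tau>) + g (p \<tau>) *v w \<tau>" for \<tau>
  define G where "G s = f (p (T + s)) + g (p (T + s)) *v v s" for s
  have F: "\<And>t. t \<ge> 0 \<Longrightarrow> F integrable_on {0..t} \<and> p t = x + integral {0..t} F"
    using sol unfolding is_solution_def F_def by auto
  have "continuous_on {0..} (\<lambda>s. p (T + s))"
    by (intro continuous_on_compose2[OF is_solution_continuous_on[OF sol, of "{0..}"]] continuous_intros)
      (use T in auto)
  moreover have "G integrable_on {0..s} \<and> p (T + s) = p T + integral {0..s} G" if s: "s \<ge> 0" for s
  proof -
    have "F integrable_on {0..T+s}" using F[of "T+s"] s T by simp
    then have "F integrable_on {T..T+s}"
      by (rule integrable_subinterval_real) (use T in auto)
    then have "((\<lambda>\<tau>. F (\<tau> + T)) has_integral integral {T..T+s} F) {T-T..T+s-T}"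
      by (intro has_integral_shift_real_ivl integrable_integral)
    then have "((\<lambda>\<tau>. F (\<tau> + T)) has_integral integral {T..T+s} F) {0..s}"
      by simp
    then have G: "(G has_integral integral {T..T+s} F) {0..s}"
      by (rule has_integral_eq[rotated]) (use vw in \<open>auto simp: F_def G_def add.commute\<close>)
    have "p (T + s) = x + integral {0..T} F + integral {T..T+s} F"
      using F[of "T+s"] Henstock_Kurzweil_Integration.integral_combine[of 0 T "T+s" F] T s by simp
    also have "\<dots> = p T + integral {0..s} G"
      using F[of T] T G by (simp add: integral_unique)
    finally show ?thesis using G by blast
  qed
  ultimately show ?thesis unfolding is_solution_def G_def by auto
qed

(* The max keeps the argument of v in [0, oo), where v is known to be measurable. *)
definition switch_control :: "(real \<Rightarrow> 'a) \<Rightarrow> real \<Rightarrow> (real \<Rightarrow> 'a) \<Rightarrow> real \<Rightarrow> 'a" where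
  "switch_control u T v t = (if t < T then u t else v (max 0 (t - T)))"

lemma admissible_switch_control:
  assumes u: "u \<in> admissible" and v: "v \<in> admissible"
  shows "switch_control u T v \<in> admissible"
proof -
  have um: "u \<in> borel_measurable (restrict_space lborel {0..})"
    and vm: "v \<in> borel_measurable (restrict_space lborel {0..})"
    using u v by (auto simp: admissible_def)
  obtain Mu Mv where "ess_bounded_by u Mu" "ess_bounded_by v Mv"
    using admissible_ess_bounded u v by metis
  then obtain Nu Nv where N: "negligible Nu" "negligible Nv"
    "\<And>t. t \<notin> Nu \<Longrightarrow> t \<ge> 0 \<Longrightarrow> norm (u t) \<le> Mu" "\<And>t. t \<notin> Nv \<Longrightarrow> t \<ge> 0 \<Longrightarrow> norm (v t) \<le> Mv"
    unfolding ess_bounded_by_def AE_lborel_iff_negligible by auto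
  have "(\<lambda>t::real. max 0 (t - T)) \<in> restrict_space lborel {0..} \<rightarrow>\<^sub>M restrict_space lborel {0..}"
    by (rule measurable_restrict_space3) auto
  then have "(\<lambda>t. v (max 0 (t - T))) \<in> borel_measurable (restrict_space lborel {0..})"
    using vm by (rule measurable_compose)
  then have meas: "switch_control u T v \<in> borel_measurable (restrict_space lborel {0..})"
    unfolding switch_control_def[abs_def]
    by (rule measurable_If[OF um]) (auto simp: sets_restrict_space_iff)
  have bound: "t \<ge> 0 \<longrightarrow> norm (switch_control u T v t) \<le> max Mu Mv"
    if t: "t \<notin> Nu \<union> (+) T ` Nv" for t
  proof (cases "t < T")
    case True
    then show ?thesis using N(3) t by (force simp: switch_control_def)
  next
    case False
    moreover have "t - T \<notin> Nv"
      using t by (metis UnCI add_diff_cancel_left' diff_add_cancel image_eqI)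
    ultimately show ?thesis using N(4)[of "t - T"] by (auto simp: switch_control_def)
  qed
  have "negligible (Nu \<union> (+) T ` Nv)"
    using N by (simp add: negligible_translation)
  with bound have "AE t in lborel. t \<ge> 0 \<longrightarrow> norm (switch_control u T v t) \<le> max Mu Mv"
    unfolding AE_lborel_iff_negligible by blast
  with meas show ?thesis unfolding admissible_def by blast
qed

lemma class_KL_bound_near_zero:
  assumes KL: "class_KL \<beta>" and r: "r > 0"
  obtains \<rho> where "0 < \<rho>" "\<rho> \<le> r" "\<And>s t. 0 \<le> s \<Longrightarrow> s \<le> \<rho> \<Longrightarrow> 0 \<le> t \<Longrightarrow> \<beta> s t \<le> r"
proof -
  have "class_K (\<lambda>s. \<beta> s 0)"
    and anti: "\<And>s. s \<ge> 0 \<Longrightarrow> antimono_on {0..} (\<beta> s)"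
    using KL unfolding class_KL_def by auto
  then have "continuous_on {0..} (\<lambda>s. \<beta> s 0)" and "\<beta> 0 0 = 0"
    unfolding class_K_def by auto
  then obtain \<rho>0 where "\<rho>0 > 0"
    and near0: "\<forall>s\<in>{0..}. dist s 0 < \<rho>0 \<longrightarrow> dist (\<beta> s 0) (\<beta> 0 0) < r"
    using r unfolding continuous_on_iff by (meson atLeast_iff order_refl)
  have small: "\<beta> s 0 < r" if "s \<ge> 0" "s < \<rho>0" for s
    using near0 that \<open>\<beta> 0 0 = 0\<close> by (auto simp: dist_real_def)
  define \<rho> where "\<rho> = min (\<rho>0 / 2) r"
  have bound: "\<beta> s t \<le> r" if "0 \<le> s" "s \<le> \<rho>" "0 \<le> t" for s t
  proof -
    have "\<beta> s t \<le> \<beta> s 0"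
      using monotone_onD[OF anti[OF \<open>0 \<le> s\<close>], of 0 t] that by simp
    also have "\<dots> < r"
      using small that \<open>\<rho>0 > 0\<close> by (simp add: \<rho>_def)
    finally show ?thesis by simp
  qed
  moreover have "0 < \<rho>" "\<rho> \<le> r"
    using \<open>\<rho>0 > 0\<close> r by (auto simp: \<rho>_def)
  ultimately show ?thesis using that by blast
qed

lemma cball_subset_D_set:
  assumes KL: "class_KL \<beta>" and r: "r > 0"
    and stabilizable: "\<And>x. x \<in> cball 0 r \<Longrightarrow>
          \<exists>u\<in>admissible. \<forall>t\<ge>0. norm (\<phi> t x u) \<le> \<beta> (norm x) t"
    and ball_safe: "cball 0 r \<subseteq> - U"
  obtains \<rho> where "\<rho> > 0" "cball 0 \<rho> \<subseteq> D_set \<phi> U"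
proof -
  obtain \<rho> where "0 < \<rho>" "\<rho> \<le> r" and bound: "\<And>s t. 0 \<le> s \<Longrightarrow> s \<le> \<rho> \<Longrightarrow> 0 \<le> t \<Longrightarrow> \<beta> s t \<le> r"
    using class_KL_bound_near_zero[OF KL r] by blast
  have "z \<in> D_set \<phi> U" if z: "norm z \<le> \<rho>" for z
  proof -
    have "z \<in> cball 0 r" using z \<open>\<rho> \<le> r\<close> by simp
    then obtain v where v: "v \<in> admissible" and decay: "\<forall>t\<ge>0. norm (\<phi> t z v) \<le> \<beta> (norm z) t"
      using stabilizable by blast
    have "\<phi> t z v \<notin> U" if "t \<ge> 0" for t
    proof -
      have "norm (\<phi> t z v) \<le> r"
        using decay bound[of "norm z" t] z that by force
      then show ?thesis using ball_safe by auto
    qed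
    moreover have "((\<lambda>t. \<beta> (norm z) t) \<longlongrightarrow> 0) at_top"
      using KL unfolding class_KL_def by simp
    then have "((\<lambda>t. norm (\<phi> t z v)) \<longlongrightarrow> 0) at_top"
      by (rule tendsto_sandwich[rotated 2, OF tendsto_const])
        (use decay in \<open>auto simp: eventually_at_top_linorder\<close>)
    ultimately show ?thesis using v unfolding D_set_def by blast
  qed
  then have "cball 0 \<rho> \<subseteq> D_set \<phi> U" by auto
  with \<open>0 < \<rho>\<close> show ?thesis by (rule that)
qed

lemma trajectory_switch_control:
  fixes f :: "real^'n \<Rightarrow> real^'n" and g :: "real^'n \<Rightarrow> real^'m^'n"
    and \<phi> :: "real \<Rightarrow> real^'n \<Rightarrow> (real \<Rightarrow> real^'m) \<Rightarrow> real^'n"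
  assumes f_lip: "loc_lipschitz f" and g_lip: "loc_lipschitz g"
    and sol: "\<And>x u. u \<in> admissible \<Longrightarrow> is_solution f g x u (\<lambda>t. \<phi> t x u)"
    and u: "u \<in> admissible" and v: "v \<in> admissible" and T: "T \<ge> 0"
  shows "t \<in> {0..T} \<Longrightarrow> \<phi> t x (switch_control u T v) = \<phi> t x u"
    and "s \<ge> 0 \<Longrightarrow> \<phi> (T + s) x (switch_control u T v) = \<phi> s (\<phi> T x u) v"
proof -
  define w where "w = switch_control u T v"
  have w: "w \<in> admissible"
    unfolding w_def using u v by (rule admissible_switch_control)
  have before: "\<phi> t x w = \<phi> t x u" if "t \<in> {0..T}" for t
    using solution_unique[OF f_lip g_lip u sol[OF u] sol[OF w] _ that]
    by (simp add: w_def switch_control_def)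
  then show "\<phi> t x (switch_control u T v) = \<phi> t x u" if "t \<in> {0..T}" for t
    using that by (simp add: w_def)
  have "\<forall>s\<ge>0. v s = w (T + s)"
    by (simp add: w_def switch_control_def)
  from solution_shift[OF sol[OF w, of x] T this]
  have shifted: "is_solution f g (\<phi> T x u) v (\<lambda>s. \<phi> (T + s) x w)"
    using before[of T] T by simp
  show "\<phi> (T + s) x (switch_control u T v) = \<phi> s (\<phi> T x u) v" if "s \<ge> 0" for s
    using solution_unique[OF f_lip g_lip v sol[OF v] shifted, of s s] that by (simp add: w_def)
qed

lemma D_set_if_reaches_D_set:
  fixes f :: "real^'n \<Rightarrow> real^'n" and g :: "real^'n \<Rightarrow> real^'m^'n"
    and \<phi> :: "real \<Rightarrow> real^'n \<Rightarrow> (real \<Rightarrow> real^'m) \<Rightarrow> real^'n"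
  assumes f_lip: "loc_lipschitz f" and g_lip: "loc_lipschitz g"
    and sol: "\<And>x u. u \<in> admissible \<Longrightarrow> is_solution f g x u (\<lambda>t. \<phi> t x u)"
    and u: "u \<in> admissible" and T: "T \<ge> 0"
    and safe: "\<forall>t\<in>{0..T}. \<phi> t x u \<notin> U" and reaches: "\<phi> T x u \<in> D_set \<phi> U"
  shows "x \<in> D_set \<phi> U"
proof -
  define z where "z = \<phi> T x u"
  obtain v where v: "v \<in> admissible" and v_lim: "((\<lambda>t. norm (\<phi> t z v)) \<longlongrightarrow> 0) at_top"
    and v_safe: "\<forall>t\<ge>0. \<phi> t z v \<notin> U"
    using reaches unfolding D_set_def z_def by blast
  define w where "w = switch_control u T v"
  have w: "w \<in> admissible"
    unfolding w_def using u v by (rule admissible_switch_control)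
  note before = trajectory_switch_control(1)[OF f_lip g_lip sol u v T, where x = x, folded w_def]
  note after = trajectory_switch_control(2)[OF f_lip g_lip sol u v T, where x = x, folded w_def z_def]
  have safe_w: "\<forall>t\<ge>0. \<phi> t x w \<notin> U"
  proof (intro allI impI)
    fix t :: real assume "t \<ge> 0"
    show "\<phi> t x w \<notin> U"
    proof (cases "t \<le> T")
      case True
      then show ?thesis using before[of t] safe \<open>t \<ge> 0\<close> by simp
    next
      case False
      then show ?thesis using after[of "t - T"] v_safe by simp
    qed
  qed
  have "filterlim (\<lambda>t. t - T) at_top at_top"
    by (rule filterlim_tendsto_add_at_top[where f = "\<lambda>_. - T" and c = "- T", simplified])
      (simp_all add: filterlim_ident)
  with v_lim have "((\<lambda>t. norm (\<phi> (t - T) z v)) \<longlongrightarrow> 0) at_top"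
    by (rule filterlim_compose)
  moreover have "\<forall>\<^sub>F t in at_top. norm (\<phi> (t - T) z v) = norm (\<phi> t x w)"
  proof (rule eventually_at_top_linorderI)
    fix t assume "t \<ge> T"
    then show "norm (\<phi> (t - T) z v) = norm (\<phi> t x w)"
      using after[of "t - T"] by simp
  qed
  ultimately have "((\<lambda>t. norm (\<phi> t x w)) \<longlongrightarrow> 0) at_top"
    by (rule Lim_transform_eventually)
  with w safe_w show ?thesis unfolding D_set_def by blast
qed

lemma D_set_open:
  fixes f :: "real^'n \<Rightarrow> real^'n" and g :: "real^'n \<Rightarrow> real^'m^'n"
    and \<phi> :: "real \<Rightarrow> real^'n \<Rightarrow> (real \<Rightarrow> real^'m) \<Rightarrow> real^'n"
  assumes f_lip: "loc_lipschitz f" and g_lip: "loc_lipschitz g"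
    and sol: "\<And>x u. u \<in> admissible \<Longrightarrow> is_solution f g x u (\<lambda>t. \<phi> t x u)"
    and "\<rho> > 0" and ball_D: "cball 0 \<rho> \<subseteq> D_set \<phi> U" and S_open: "open (- U)"
  shows "open (D_set \<phi> U)"
  unfolding open_contains_ball
proof
  fix y assume "y \<in> D_set \<phi> U"
  then obtain u where u: "u \<in> admissible" and lim: "((\<lambda>t. norm (\<phi> t y u)) \<longlongrightarrow> 0) at_top"
    and safe: "\<forall>t\<ge>0. \<phi> t y u \<notin> U"
    unfolding D_set_def by blast
  have "\<forall>\<^sub>F t in at_top. norm (\<phi> t y u) < \<rho> / 2"
    using lim \<open>\<rho> > 0\<close> by (intro order_tendstoD(2)) auto
  then obtain T0 where T0: "\<And>t. t \<ge> T0 \<Longrightarrow> norm (\<phi> t y u) < \<rho> / 2"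
    unfolding eventually_at_top_linorder by blast
  define T where "T = max T0 0"
  have "T \<ge> 0" and T: "norm (\<phi> T y u) < \<rho> / 2"
    using T0 by (auto simp: T_def)
  define K where "K = (\<lambda>t. \<phi> t y u) ` {0..T}"
  have "compact K" unfolding K_def
    by (intro compact_continuous_image is_solution_continuous_on[OF sol[OF u]]) auto
  moreover have "K \<subseteq> - U" unfolding K_def using safe by auto
  ultimately obtain e where "e > 0" and tube: "(\<Union>q\<in>K. ball q e) \<subseteq> - U"
    using compact_subset_open_imp_ball_epsilon_subset S_open by blast
  obtain \<delta> where "\<delta> > 0" and near: "\<And>x q t. is_solution f g x u q \<Longrightarrow> dist x y < \<delta> \<Longrightarrow>
      t \<in> {0..T} \<Longrightarrow> dist (q t) (\<phi> t y u) < min e (\<rho> / 2)"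
    using solution_continuous_dependence[OF f_lip g_lip u sol[OF u] \<open>T \<ge> 0\<close>, of "min e (\<rho> / 2)"]
      \<open>e > 0\<close> \<open>\<rho> > 0\<close> by auto
  have "ball y \<delta> \<subseteq> D_set \<phi> U"
  proof
    fix x assume "x \<in> ball y \<delta>"
    then have close: "dist (\<phi> t x u) (\<phi> t y u) < min e (\<rho> / 2)" if "t \<in> {0..T}" for t
      using near[OF sol[OF u] _ that] by (simp add: dist_commute)
    have "\<phi> t x u \<in> ball (\<phi> t y u) e" if "t \<in> {0..T}" for t
      using close[OF that] by (simp add: dist_commute)
    then have "\<forall>t\<in>{0..T}. \<phi> t x u \<notin> U"
      using tube unfolding K_def by blast
    moreover have "norm (\<phi> T x u - \<phi> T y u) < \<rho> / 2"
      using close[of T] \<open>T \<ge> 0\<close> by (simp add: dist_norm)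
    then have "norm (\<phi> T x u) < \<rho>"
      using norm_triangle_sub[of "\<phi> T x u" "\<phi> T y u"] T by linarith
    then have "\<phi> T x u \<in> D_set \<phi> U"
      using ball_D by auto
    ultimately show "x \<in> D_set \<phi> U"
      using D_set_if_reaches_D_set[OF f_lip g_lip sol u \<open>T \<ge> 0\<close>] by blast
  qed
  with \<open>\<delta> > 0\<close> show "\<exists>\<delta>>0. ball y \<delta> \<subseteq> D_set \<phi> U" by blast
qed

lemma D_set_subset_D0_set: "D_set \<phi> U \<subseteq> D0_set \<phi>"
  unfolding D_set_def D0_set_def by blast

lemma D_set_subset_Ds_set: "D_set \<phi> U \<subseteq> Ds_set \<phi> U"
proof
  fix x assume "x \<in> D_set \<phi> U"
  then obtain u where "u \<in> admissible" "\<forall>t\<ge>0. \<phi> t x u \<notin> U"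
    unfolding D_set_def by blast
  moreover from this(2) have no_exit: "{t. t \<ge> 0 \<and> \<phi> t x u \<in> U} = {}"
    by auto
  have "exit_time \<phi> U x u = \<infinity>"
    unfolding exit_time_def no_exit by (simp add: top_ereal_def)
  ultimately show "x \<in> Ds_set \<phi> U"
    unfolding Ds_set_def by blast
qed

lemma frontier_if_closure_subset:
  assumes "A \<subseteq> B" "y \<in> closure A" "y \<notin> B"
  shows "y \<in> frontier B"
  using assms closure_mono[OF assms(1)] interior_subset[of B] unfolding frontier_def by blast

theorem mainTheorem2:
  fixes f :: "real^'n \<Rightarrow> real^'n"
    and g :: "real^'n \<Rightarrow> real^'m^'n"
    and \<phi> :: "real \<Rightarrow> real^'n \<Rightarrow> (real \<Rightarrow> real^'m) \<Rightarrow> real^'n"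
    and U :: "(real^'n) set"
    and h :: "real^'n \<Rightarrow> real"
    and r k :: real
    and \<beta> :: "real \<Rightarrow> real \<Rightarrow> real"
  assumes f_lip: "loc_lipschitz f"
    and g_lip: "loc_lipschitz g"
    and f0: "f 0 = 0"
    and sol: "\<And>x u. u \<in> admissible \<Longrightarrow> is_solution f g x u (\<lambda>t. \<phi> t x u)"
    (* Assumption A1 *)
    and r_pos: "r > 0" and k_pos: "k > 0" and beta_KL: "class_KL \<beta>"
    and A1: "\<And>x. x \<in> cball 0 r \<Longrightarrow>
               \<exists>u\<in>admissible. ess_bounded_by u k \<and> (\<forall>t\<ge>0. norm (\<phi> t x u) \<le> \<beta> (norm x) t)"
    (* Assumption A2 *)
    and h_lip: "loc_lipschitz h"
    and S_def: "- U = {x. h x < 1}"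
    and S_open: "open (- U)" and S_conn: "connected (- U)"
    and ball_S: "cball 0 r \<subseteq> - U" and S_D0: "- U \<subseteq> D0_set \<phi>"
  shows "\<forall>y\<in>frontier (D_set \<phi> U).
           y \<in> frontier (D0_set \<phi>)
         \<or> y \<in> frontier (Ds_set \<phi> U) \<inter> D0_set \<phi>
         \<or> y \<in> (Ds_set \<phi> U \<inter> D0_set \<phi>) - D_set \<phi> U"
proof -
  have stabilizable: "\<And>x. x \<in> cball 0 r \<Longrightarrow> \<exists>u\<in>admissible. \<forall>t\<ge>0. norm (\<phi> t x u) \<le> \<beta> (norm x) t"
    using A1 by blast
  obtain \<rho> where "\<rho> > 0" "cball 0 \<rho> \<subseteq> D_set \<phi> U"
    using cball_subset_D_set[OF beta_KL r_pos stabilizable ball_S] by blast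
  then have "open (D_set \<phi> U)"
    by (intro D_set_open[OF f_lip g_lip sol _ _ S_open])
  show ?thesis
  proof
    fix y assume y: "y \<in> frontier (D_set \<phi> U)"
    then have "y \<notin> D_set \<phi> U"
      using \<open>open (D_set \<phi> U)\<close> frontier_disjoint_eq by blast
    moreover have "y \<in> closure (D_set \<phi> U)"
      using y by (simp add: frontier_def)
    ultimately show "y \<in> frontier (D0_set \<phi>)
         \<or> y \<in> frontier (Ds_set \<phi> U) \<inter> D0_set \<phi>
         \<or> y \<in> (Ds_set \<phi> U \<inter> D0_set \<phi>) - D_set \<phi> U"
      using frontier_if_closure_subset[OF D_set_subset_D0_set]
        frontier_if_closure_subset[OF D_set_subset_Ds_set] by blast
  qed
qed

end
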